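(* Let $d_{\mathrm{in}},d_{\mathrm{out}}\ge1$, $\lambda\in\mathbb{R}^{d_{\mathrm{in}}}$, $\eta,\alpha,\tau\in\mathbb{R}$, for each $q\in\{0,\dots,d_{\mathrm{out}}-1\}$ a neighborhood set $\mathcal N(q)\subseteq\{0,\dots,d_{\mathrm{out}}-1\}$ and real weights $\omega_{qj}$, $j\in\mathcal N(q)$. Fix $B_{\mathrm{in}}>0$ and let $\mathcal B_{\mathrm{in}}=[-B_{\mathrm{in}},B_{\mathrm{in}}]^{d_{\mathrm{in}}}$. Let $$I_\phi=[-B_{\mathrm{in}}-|\eta|(d_{\mathrm{out}}-1),\,B_{\mathrm{in}}+|\eta|(d_{\mathrm{out}}-1)],\quad M_\phi=\|\phi\|_{L^\infty(I_\phi)},$$ $$B_\omega=\sup_q\sum_{j\in\mathcal N(q)}|\omega_{qj}|,\quad R_{\mathrm{mix}}=1+|\tau|B_\omega,\quad M_s=\|\lambda\|_1M_\phi+|\alpha|(d_{\mathrm{out}}-1),\quad I_\Phi=[-R_{\mathrm{mix}}M_s,\,R_{\mathrm{mix}}M_s].$$ Assume $\phi$ is $C^2$ on a neighborhood of $I_\phi$ and $\Phi$ is $C^2$ on a neighborhood of $I_\Phi$. For $\mathbf z\in\mathcal B_{\mathrm{in}}$ define $s_q(\mathbf z)=\sum_{i=1}^{d_{\mathrm{in}}}\lambda_i\phi(z_i+\eta q)+\alpha q$, $\tilde s_q=s_q+\tau\sum_{j\in\mathcal N(q)}\omega_{qj}s_j$, and $[T(\mathbf z)]_q=\Phi(\tilde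 s_q(\mathbf z))$. Let $\hat\phi$ be the piecewise-linear interpolant of $\phi$ on a uniform grid of $G_\phi\ge2$ knots over $I_\phi$, $\hat\Phi$ the piecewise-linear interpolant of $\Phi$ on a uniform grid of $G_\Phi\ge2$ knots over $I_\Phi$, and $\hat T$ the map defined as $T$ with $(\phi,\Phi)$ replaced by $(\hat\phi,\hat\Phi)$ (same $\lambda,\eta,\alpha,\tau,\omega,\mathcal N$). Put $h_\phi=|I_\phi|/(G_\phi-1)$, $h_\Phi=|I_\Phi|/(G_\Phi-1)$, $M_{\phi''}=\|\phi''\|_{L^\infty(I_\phi)}$, $M_{\Phi''}=\|\Phi''\|_{L^\infty(I_\Phi)}$, $L_\Phi=\|\Phi'\|_{L^\infty(I_\Phi)}$, $\delta_\phi=\frac{M_{\phi''}}8h_\phi^2$, $\delta_\Phi=\frac{M_{\Phi''}}8h_\Phi^2$. Then for all $\mathbf z\in\mathcal B_{\mathrm{in}}$, $$\|T(\mathbf z)-\hat T(\mathbf z)\|_\infty\le L_\Phi R_{\mathrm{mix}}\|\lambda\|_1\delta_\phi+\delta_\Phi\le K_T\max\{h_\phi^2,h_\Phi^2\},\quad K_T=\tfrac18\bigl(L_\Phi R_{\mathrm{mix}}\|\lambda\|_1M_{\phi''}+M_{\Phi''}\bigr).$$ Moreover, if $R:\mathbb{R}^{d_{\mathrm{in}}}\to\mathbb{R}^{d_{\mathrm{out}}}$ is any map and $T_{\mathrm{res}}=T+R$, $\hat T_{\mathrm{res}}=\hat T+R$, the same bounds hold for $\|T_{\mathrm{res}}(\mathbf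 z)-\hat T_{\mathrm{res}}(\mathbf z)\|_\infty$.
   Context: This describes a single Sprecher block with optional lateral mixing: the output channels are indexed $q=0,\dots,d_{\mathrm{out}}-1$, $\|\lambda\|_1=\sum_i|\lambda_i|$, and $|I|$ denotes the length of an interval $I$. *)

theory Defs
  imports "HOL-Analysis.Analysis"
begin

text \<open>Vectors in R^d are modelled as functions nat => real, indices 0..d-1.\<close>

definition C2_near :: "(real \<Rightarrow> real) \<Rightarrow> real set \<Rightarrow> bool" where
  "C2_near f S \<longleftrightarrow> (\<exists>U. open U \<and> S \<subseteq> U \<and>
      (\<forall>x\<in>U. f differentiable (at x)) \<and>
      (\<forall>x\<in>U. deriv f differentiable (at x)) \<and>
      continuous_on U (deriv (deriv f)))"

definition sup_abs :: "(real \<Rightarrow> real) \<Rightarrow> real \<Rightarrow> real \<Rightarrow> real" where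
  "sup_abs f a b = (SUP x\<in>{a..b}. \<bar>f x\<bar>)"

definition pl_interp :: "(real \<Rightarrow> real) \<Rightarrow> real \<Rightarrow> real \<Rightarrow> nat \<Rightarrow> real \<Rightarrow> real" where
  "pl_interp f a b G x =
     (let h = (b - a) / (real G - 1);
          k = min (nat \<lfloor>(x - a) / h\<rfloor>) (G - 2);
          t = (x - a) / h - real k
      in (1 - t) * f (a + real k * h) + t * f (a + real (k + 1) * h))"

definition sprecher_s ::
  "(real \<Rightarrow> real) \<Rightarrow> (nat \<Rightarrow> real) \<Rightarrow> real \<Rightarrow> real \<Rightarrow> nat \<Rightarrow> (nat \<Rightarrow> real) \<Rightarrow> nat \<Rightarrow> real" where
  "sprecher_s phi lam eta alpha din z q =
     (\<Sum>i<din. lam i * phi (z i + eta * real q)) + alpha * real q"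

definition sprecher_stilde ::
  "(real \<Rightarrow> real) \<Rightarrow> (nat \<Rightarrow> real) \<Rightarrow> real \<Rightarrow> real \<Rightarrow> real \<Rightarrow> (nat \<Rightarrow> nat \<Rightarrow> real)
   \<Rightarrow> (nat \<Rightarrow> nat set) \<Rightarrow> nat \<Rightarrow> (nat \<Rightarrow> real) \<Rightarrow> nat \<Rightarrow> real" where
  "sprecher_stilde phi lam eta alpha tau omega N din z q =
     sprecher_s phi lam eta alpha din z q
     + tau * (\<Sum>j\<in>N q. omega q j * sprecher_s phi lam eta alpha din z j)"

definition sprecher_T ::
  "(real \<Rightarrow> real) \<Rightarrow> (real \<Rightarrow> real) \<Rightarrow> (nat \<Rightarrow> real) \<Rightarrow> real \<Rightarrow> real \<Rightarrow> real
   \<Rightarrow> (nat \<Rightarrow> nat \<Rightarrow> real) \<Rightarrow> (nat \<Rightarrow> nat set) \<Rightarrow> nat \<Rightarrow> (nat \<Rightarrow> real) \<Rightarrow> nat \<Rightarrow> real" where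
  "sprecher_T phi Phi lam eta alpha tau omega N din z q =
     Phi (sprecher_stilde phi lam eta alpha tau omega N din z q)"

definition vec_inf_norm :: "nat \<Rightarrow> (nat \<Rightarrow> real) \<Rightarrow> real" where
  "vec_inf_norm d v = Max ((\<lambda>q. \<bar>v q\<bar>) ` {..<d})"

end

theory Submission
  imports Defs
begin

text \<open>
  The exact and the interpolated block apply the same linear maps to their inner functions:
  the weighted inner sum, of sup-norm gain \<open>\<parallel>\<lambda>\<parallel>\<^sub>1\<close>, and the lateral mixing, of
  gain \<open>R\<^sub>m\<^sub>i\<^sub>x\<close>. Piecewise-linear interpolation with mesh h is uniformly within
  \<open>\<parallel>f''\<parallel> h\<^sup>2/8\<close> of f and never leaves the range of f, so the mixed activations of
  both blocks lie in \<open>I\<^sub>\<Phi>\<close> and differ there by at most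
  \<open>R\<^sub>m\<^sub>i\<^sub>x \<parallel>\<lambda>\<parallel>\<^sub>1 \<delta>\<^sub>\<phi>\<close>. Splitting the output error at the exact outer function
  on the interpolated activation, the mean value theorem bounds one part by \<open>L\<^sub>\<Phi>\<close> times
  that difference and the interpolation estimate bounds the other by \<open>\<delta>\<^sub>\<Phi>\<close>.
\<close>

lemma C2_nearD:
  assumes "C2_near f S"
  shows "\<And>x. x \<in> S \<Longrightarrow> DERIV f x :> deriv f x"
    and "\<And>x. x \<in> S \<Longrightarrow> DERIV (deriv f) x :> deriv (deriv f) x"
    and "continuous_on S f"
    and "continuous_on S (deriv f)"
    and "continuous_on S (deriv (deriv f))"
proof -
  obtain U where U: "open U" "S \<subseteq> U" "\<forall>x\<in>U. f differentiable (at x)"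
     "\<forall>x\<in>U. deriv f differentiable (at x)" "continuous_on U (deriv (deriv f))"
    using assms unfolding C2_near_def by blast
  show f': "DERIV f x :> deriv f x" and f'': "DERIV (deriv f) x :> deriv (deriv f) x"
    if "x \<in> S" for x
    using U that DERIV_deriv_iff_real_differentiable by blast+
  show "continuous_on S f" "continuous_on S (deriv f)"
    using f' f'' by (meson DERIV_isCont continuous_at_imp_continuous_on)+
  show "continuous_on S (deriv (deriv f))"
    using U continuous_on_subset by blast
qed

lemma abs_le_sup_abs:
  assumes "continuous_on {a..b} g" "x \<in> {a..b}"
  shows "\<bar>g x\<bar> \<le> sup_abs g a b"
proof -
  have "compact ((\<lambda>x. \<bar>g x\<bar>) ` {a..b})"
    using assms(1) by (intro compact_continuous_image continuous_intros) auto
  then have "bdd_above ((\<lambda>x. \<bar>g x\<bar>) ` {a..b})"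
    by (intro bounded_imp_bdd_above compact_imp_bounded)
  then show ?thesis
    unfolding sup_abs_def using assms(2) by (intro cSUP_upper) auto
qed

lemma sup_abs_nonneg:
  assumes "continuous_on {a..b} g" "a \<le> b"
  shows "0 \<le> sup_abs g a b"
  using abs_le_sup_abs[OF assms(1), of a] assms(2) by auto

lemma abs_diff_le_sup_abs_deriv:
  assumes "\<And>x. x \<in> {a..b} \<Longrightarrow> DERIV f x :> deriv f x" "continuous_on {a..b} (deriv f)"
    and "x \<in> {a..b}" "y \<in> {a..b}"
  shows "\<bar>f x - f y\<bar> \<le> sup_abs (deriv f) a b * \<bar>x - y\<bar>"
  using field_differentiable_bound[of "{a..b}" f "deriv f" "sup_abs (deriv f) a b" x y]
    assms abs_le_sup_abs[OF assms(2)] by (auto intro: has_field_derivative_at_within)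

lemma Taylor_2:
  fixes f f' f'' :: "real \<Rightarrow> real"
  assumes f': "\<And>t. t \<in> {a..b} \<Longrightarrow> DERIV f t :> f' t"
    and f'': "\<And>t. t \<in> {a..b} \<Longrightarrow> DERIV f' t :> f'' t"
    and x: "x \<in> {a..b}" and y: "y \<in> {a..b}"
  shows "\<exists>\<xi>\<in>{a..b}. f y = f x + f' x * (y - x) + f'' \<xi> / 2 * (y - x)\<^sup>2"
proof (cases "y = x")
  case True
  then show ?thesis using x by auto
next
  case False
  define diff where "diff m = (if m = 0 then f else if m = 1 then f' else f'')" for m :: nat
  have "\<exists>t. (if y < x then y < t \<and> t < x else x < t \<and> t < y) \<and>
    f y = (\<Sum>m<2. diff m x / fact m * (y - x) ^ m) + diff 2 t / fact 2 * (y - x)\<^sup>2"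
    using x y False f' f'' by (intro Taylor[where a = a and b = b]) (auto simp: diff_def)
  then obtain t where t: "if y < x then y < t \<and> t < x else x < t \<and> t < y"
    and "f y = (\<Sum>m<2. diff m x / fact m * (y - x) ^ m) + diff 2 t / fact 2 * (y - x)\<^sup>2"
    by blast
  then have "f y = f x + f' x * (y - x) + f'' t / 2 * (y - x)\<^sup>2"
    by (simp add: diff_def numeral_2_eq_2)
  moreover have "t \<in> {a..b}" using t x y by (auto split: if_splits)
  ultimately show ?thesis by blast
qed

text \<open>Taylor-expand both knots around \<open>u + t h\<close>: the first-order terms cancel and the
  remainders carry the weight \<open>(1 - t) t \<le> 1/4\<close>.\<close>

lemma chord_interpolation_error:
  fixes f f' f'' :: "real \<Rightarrow> real"
  assumes f': "\<And>s. s \<in> {u..u + h} \<Longrightarrow> DERIV f s :> f' s"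
    and f'': "\<And>s. s \<in> {u..u + h} \<Longrightarrow> DERIV f' s :> f'' s"
    and M: "\<And>s. s \<in> {u..u + h} \<Longrightarrow> \<bar>f'' s\<bar> \<le> M"
    and h: "0 \<le> h" and t: "0 \<le> t" "t \<le> 1"
  shows "\<bar>(1 - t) * f u + t * f (u + h) - f (u + t * h)\<bar> \<le> M / 8 * h\<^sup>2"
proof -
  define x where "x = u + t * h"
  have x: "x \<in> {u..u + h}" and u: "u \<in> {u..u + h}" and uh: "u + h \<in> {u..u + h}"
    using h t mult_left_le_one_le[OF h t] by (auto simp: x_def)
  obtain c1 where c1: "c1 \<in> {u..u + h}" "f u = f x + f' x * (u - x) + f'' c1 / 2 * (u - x)\<^sup>2"
    using Taylor_2[OF f' f'' x u] by blast
  obtain c2 where c2: "c2 \<in> {u..u + h}"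
      "f (u + h) = f x + f' x * (u + h - x) + f'' c2 / 2 * (u + h - x)\<^sup>2"
    using Taylor_2[OF f' f'' x uh] by blast
  have "(1 - t) * f u + t * f (u + h) - f x
      = (1 - t) * t * h\<^sup>2 / 2 * (t * f'' c1 + (1 - t) * f'' c2)"
    unfolding c1(2) c2(2) x_def by (simp add: power2_eq_square field_simps)
  also have "\<bar>\<dots>\<bar> \<le> (1 - t) * t * h\<^sup>2 / 2 * (t * M + (1 - t) * M)"
  proof -
    have "\<bar>t * f'' c1 + (1 - t) * f'' c2\<bar> \<le> t * M + (1 - t) * M"
      using t M[OF c1(1)] M[OF c2(1)]
      by (intro order.trans[OF abs_triangle_ineq] add_mono) (auto simp: abs_mult mult_left_mono)
    then show ?thesis using t by (simp add: abs_mult mult_left_mono)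
  qed
  also have "\<dots> = (1 - t) * t * (h\<^sup>2 * M) / 2" by (simp add: algebra_simps)
  also have "\<dots> \<le> 1 / 4 * (h\<^sup>2 * M) / 2"
  proof -
    have "(1 - t) * t \<le> 1 / 4"
      using zero_le_power2[of "t - 1 / 2"] by (simp add: power2_eq_square algebra_simps)
    moreover have "0 \<le> M" using M[OF u] by linarith
    ultimately show ?thesis by (intro divide_right_mono mult_right_mono) auto
  qed
  finally show ?thesis by (simp add: x_def mult.commute)
qed

text \<open>The knot index is clamped to \<open>G - 2\<close>, so b lies in the last cell with \<open>t = 1\<close>;
  for \<open>a = b\<close> the mesh is 0 and the junk quotient \<open>(x - a) / 0 = 0\<close> gives \<open>t = 0\<close>.\<close>

lemma pl_interp_cell:
  fixes f :: "real \<Rightarrow> real"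
  assumes ab: "a \<le> b" and G: "2 \<le> G" and x: "x \<in> {a..b}"
  defines "h \<equiv> (b - a) / (real G - 1)"
  obtains u t where "pl_interp f a b G x = (1 - t) * f u + t * f (u + h)"
    and "x = u + t * h" and "a \<le> u" and "u + h \<le> b" and "0 \<le> t" and "t \<le> 1"
proof (cases "a = b")
  case True
  with x show ?thesis
    by (intro that[where u = a and t = 0]) (simp_all add: pl_interp_def h_def)
next
  case False
  have h: "0 < h" using ab G False unfolding h_def by auto
  have b: "b = a + (real G - 1) * h" using G unfolding h_def by auto
  define y where "y = (x - a) / h"
  define k where "k = min (nat \<lfloor>y\<rfloor>) (G - 2)"
  have y: "0 \<le> y" "y \<le> real G - 1"
    using x h b unfolding y_def by (auto simp: field_simps)
  have k: "0 \<le> y - real k \<and> y - real k \<le> 1 \<and> real k + 1 \<le> real G - 1"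
  proof (cases "nat \<lfloor>y\<rfloor> \<le> G - 2")
    case True
    then show ?thesis
      using y G unfolding k_def by (auto simp: of_nat_diff) linarith
  next
    case False
    then have "y = real G - 1" using y G by linarith
    then show ?thesis using False G unfolding k_def by (auto simp: of_nat_diff)
  qed
  show ?thesis
  proof (rule that[where u = "a + real k * h" and t = "y - real k"])
    show "pl_interp f a b G x = (1 - (y - real k)) * f (a + real k * h)
        + (y - real k) * f (a + real k * h + h)"
      unfolding pl_interp_def Let_def h_def[symmetric] y_def[symmetric] k_def[symmetric]
      by (simp add: algebra_simps)
    show "x = a + real k * h + (y - real k) * h"
      using h unfolding y_def by (simp add: field_simps)
    show "a + real k * h + h \<le> b"
    proof -
      have "(real k + 1) * h \<le> (real G - 1) * h" using k h by (intro mult_right_mono) auto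
      then show ?thesis using b by (simp add: algebra_simps)
    qed
  qed (use k h in auto)
qed

lemma pl_interp_error:
  fixes f f' f'' :: "real \<Rightarrow> real"
  assumes "a \<le> b" "2 \<le> G" "x \<in> {a..b}"
    and "\<And>s. s \<in> {a..b} \<Longrightarrow> DERIV f s :> f' s"
    and "\<And>s. s \<in> {a..b} \<Longrightarrow> DERIV f' s :> f'' s"
    and "\<And>s. s \<in> {a..b} \<Longrightarrow> \<bar>f'' s\<bar> \<le> M"
  shows "\<bar>f x - pl_interp f a b G x\<bar> \<le> M / 8 * ((b - a) / (real G - 1))\<^sup>2"
proof -
  define h where "h = (b - a) / (real G - 1)"
  obtain u t where ut: "pl_interp f a b G x = (1 - t) * f u + t * f (u + h)"
    "x = u + t * h" "a \<le> u" "u + h \<le> b" "0 \<le> t" "t \<le> 1"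
    using pl_interp_cell[OF assms(1-3)] unfolding h_def by blast
  have "0 \<le> h" using assms(1,2) unfolding h_def by auto
  with ut have "\<bar>(1 - t) * f u + t * f (u + h) - f (u + t * h)\<bar> \<le> M / 8 * h\<^sup>2"
    by (intro chord_interpolation_error) (auto intro: assms(4-6))
  then show ?thesis
    using ut(1,2) unfolding h_def by (simp add: abs_minus_commute)
qed

lemma pl_interp_abs_le:
  fixes f :: "real \<Rightarrow> real"
  assumes "a \<le> b" "2 \<le> G" "x \<in> {a..b}" and "\<And>s. s \<in> {a..b} \<Longrightarrow> \<bar>f s\<bar> \<le> M"
  shows "\<bar>pl_interp f a b G x\<bar> \<le> M"
proof -
  define h where "h = (b - a) / (real G - 1)"
  obtain u t where ut: "pl_interp f a b G x = (1 - t) * f u + t * f (u + h)"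
    "a \<le> u" "u + h \<le> b" "0 \<le> t" "t \<le> 1"
    using pl_interp_cell[OF assms(1-3)] unfolding h_def by blast
  have "0 \<le> h" using assms(1,2) unfolding h_def by auto
  then have "\<bar>f u\<bar> \<le> M" "\<bar>f (u + h)\<bar> \<le> M" using ut by (auto intro: assms(4))
  then have "\<bar>(1 - t) * f u + t * f (u + h)\<bar> \<le> (1 - t) * M + t * M"
    using ut(4,5) by (intro order.trans[OF abs_triangle_ineq] add_mono)
      (auto simp: abs_mult mult_left_mono)
  then show ?thesis using ut(1) by (simp add: algebra_simps)
qed

corollary pl_interp_error_sup_abs:
  assumes "a \<le> b" "2 \<le> G" "x \<in> {a..b}" "C2_near f {a..b}"
  shows "\<bar>f x - pl_interp f a b G x\<bar>
           \<le> sup_abs (deriv (deriv f)) a b / 8 * ((b - a) / (real G - 1))\<^sup>2"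
  using assms(1-3) C2_nearD[OF assms(4)]
  by (intro pl_interp_error[where f' = "deriv f"]) (auto intro: abs_le_sup_abs)

corollary pl_interp_abs_le_sup_abs:
  assumes "a \<le> b" "2 \<le> G" "x \<in> {a..b}" "continuous_on {a..b} f"
  shows "\<bar>pl_interp f a b G x\<bar> \<le> sup_abs f a b"
  using assms by (intro pl_interp_abs_le) (auto intro: abs_le_sup_abs)

definition lateral_mix ::
  "real \<Rightarrow> (nat \<Rightarrow> nat \<Rightarrow> real) \<Rightarrow> (nat \<Rightarrow> nat set) \<Rightarrow> (nat \<Rightarrow> real) \<Rightarrow> nat \<Rightarrow> real" where
  "lateral_mix tau omega N s q = s q + tau * (\<Sum>j\<in>N q. omega q j * s j)"

lemma sprecher_stilde_eq_lateral_mix: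
  "sprecher_stilde phi lam eta alpha tau omega N din z =
     lateral_mix tau omega N (sprecher_s phi lam eta alpha din z)"
  by (simp add: fun_eq_iff sprecher_stilde_def lateral_mix_def)

lemma lateral_mix_diff:
  "lateral_mix tau omega N s q - lateral_mix tau omega N s' q =
     lateral_mix tau omega N (\<lambda>j. s j - s' j) q"
  by (simp add: lateral_mix_def sum_subtractf algebra_simps)

lemma abs_sum_mult_le:
  fixes c g :: "'a \<Rightarrow> real"
  assumes "\<And>i. i \<in> A \<Longrightarrow> \<bar>g i\<bar> \<le> K"
  shows "\<bar>\<Sum>i\<in>A. c i * g i\<bar> \<le> (\<Sum>i\<in>A. \<bar>c i\<bar>) * K"
proof -
  have "\<bar>\<Sum>i\<in>A. c i * g i\<bar> \<le> (\<Sum>i\<in>A. \<bar>c i\<bar> * \<bar>g i\<bar>)"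
    using sum_abs[of "\<lambda>i. c i * g i" A] by (simp add: abs_mult)
  also have "\<dots> \<le> (\<Sum>i\<in>A. \<bar>c i\<bar> * K)"
    using assms by (intro sum_mono mult_left_mono) auto
  finally show ?thesis by (simp add: sum_distrib_right)
qed

lemma abs_lateral_mix_le:
  assumes "finite D" "q \<in> D" "N q \<subseteq> D" "\<And>j. j \<in> D \<Longrightarrow> \<bar>s j\<bar> \<le> K"
    and "(\<Sum>j\<in>N q. \<bar>omega q j\<bar>) \<le> B"
  shows "\<bar>lateral_mix tau omega N s q\<bar> \<le> (1 + \<bar>tau\<bar> * B) * K"
proof -
  have K: "0 \<le> K" using assms(2,4) by force
  have "\<bar>\<Sum>j\<in>N q. omega q j * s j\<bar> \<le> (\<Sum>j\<in>N q. \<bar>omega q j\<bar>) * K"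
    using assms(3,4) by (intro abs_sum_mult_le) auto
  also have "\<dots> \<le> B * K" using assms(5) K by (rule mult_right_mono)
  finally have "\<bar>tau * (\<Sum>j\<in>N q. omega q j * s j)\<bar> \<le> \<bar>tau\<bar> * (B * K)"
    by (simp add: abs_mult mult_left_mono)
  moreover have "\<bar>s q\<bar> \<le> K" using assms(2,4) by blast
  ultimately have "\<bar>s q\<bar> + \<bar>tau * (\<Sum>j\<in>N q. omega q j * s j)\<bar> \<le> (1 + \<bar>tau\<bar> * B) * K"
    by (simp add: algebra_simps)
  then show ?thesis
    unfolding lateral_mix_def by (rule order.trans[OF abs_triangle_ineq])
qed

lemma sprecher_arg_bound:
  assumes "\<bar>z i\<bar> \<le> Bin" "q < dout"
  shows "z i + eta * real q \<in> {- (Bin + \<bar>eta\<bar> * (real dout - 1)) .. Bin + \<bar>eta\<bar> * (real dout - 1)}"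
proof -
  have "\<bar>eta * real q\<bar> \<le> \<bar>eta\<bar> * (real dout - 1)"
    using assms(2) by (simp add: abs_mult mult_left_mono)
  then show ?thesis using assms(1) abs_triangle_ineq[of "z i" "eta * real q"] by auto
qed

lemma abs_sprecher_s_le:
  assumes "q < dout" "\<And>i. i < din \<Longrightarrow> \<bar>phi (z i + eta * real q)\<bar> \<le> M"
  shows "\<bar>sprecher_s phi lam eta alpha din z q\<bar>
           \<le> (\<Sum>i<din. \<bar>lam i\<bar>) * M + \<bar>alpha\<bar> * (real dout - 1)"
proof -
  have "\<bar>\<Sum>i<din. lam i * phi (z i + eta * real q)\<bar> \<le> (\<Sum>i<din. \<bar>lam i\<bar>) * M"
    using assms(2) by (intro abs_sum_mult_le) auto
  moreover have "\<bar>alpha * real q\<bar> \<le> \<bar>alpha\<bar> * (real dout - 1)"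
    using assms(1) by (simp add: abs_mult mult_left_mono)
  ultimately show ?thesis
    unfolding sprecher_s_def
    using abs_triangle_ineq[of "\<Sum>i<din. lam i * phi (z i + eta * real q)" "alpha * real q"]
    by linarith
qed

lemma abs_sprecher_s_diff_le:
  assumes "\<And>i. i < din \<Longrightarrow> \<bar>phi (z i + eta * real q) - psi (z i + eta * real q)\<bar> \<le> \<delta>"
  shows "\<bar>sprecher_s phi lam eta alpha din z q - sprecher_s psi lam eta alpha din z q\<bar>
           \<le> (\<Sum>i<din. \<bar>lam i\<bar>) * \<delta>"
proof -
  have "sprecher_s phi lam eta alpha din z q - sprecher_s psi lam eta alpha din z q
      = (\<Sum>i<din. lam i * (phi (z i + eta * real q) - psi (z i + eta * real q)))"
    by (simp add: sprecher_s_def sum_subtractf right_diff_distrib)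
  also have "\<bar>\<dots>\<bar> \<le> (\<Sum>i<din. \<bar>lam i\<bar>) * \<delta>"
    using assms by (intro abs_sum_mult_le) auto
  finally show ?thesis .
qed

lemma abs_sprecher_T_diff_le:
  fixes phi psi Phi Psi :: "real \<Rightarrow> real"
  assumes q: "q < dout" and N: "\<And>q. q < dout \<Longrightarrow> N q \<subseteq> {..<dout}"
    and args: "\<And>i q. i < din \<Longrightarrow> q < dout \<Longrightarrow> z i + eta * real q \<in> I"
    and phi: "\<And>y. y \<in> I \<Longrightarrow> \<bar>phi y\<bar> \<le> M" and psi: "\<And>y. y \<in> I \<Longrightarrow> \<bar>psi y\<bar> \<le> M"
    and phi_psi: "\<And>y. y \<in> I \<Longrightarrow> \<bar>phi y - psi y\<bar> \<le> \<delta>"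
    and omega: "\<And>q. q < dout \<Longrightarrow> (\<Sum>j\<in>N q. \<bar>omega q j\<bar>) \<le> B"
    and A: "(1 + \<bar>tau\<bar> * B) * ((\<Sum>i<din. \<bar>lam i\<bar>) * M + \<bar>alpha\<bar> * (real dout - 1)) \<le> A"
    and Phi_lip: "\<And>x y. x \<in> {-A..A} \<Longrightarrow> y \<in> {-A..A} \<Longrightarrow> \<bar>Phi x - Phi y\<bar> \<le> L * \<bar>x - y\<bar>"
    and Phi_Psi: "\<And>y. y \<in> {-A..A} \<Longrightarrow> \<bar>Phi y - Psi y\<bar> \<le> \<delta>'"
    and L: "0 \<le> L"
  shows "\<bar>sprecher_T phi Phi lam eta alpha tau omega N din z q
          - sprecher_T psi Psi lam eta alpha tau omega N din z q\<bar>
           \<le> L * (1 + \<bar>tau\<bar> * B) * (\<Sum>i<din. \<bar>lam i\<bar>) * \<delta> + \<delta>'"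
proof -
  define s where "s = sprecher_s phi lam eta alpha din z"
  define s' where "s' = sprecher_s psi lam eta alpha din z"
  define x where "x = lateral_mix tau omega N s q"
  define y where "y = lateral_mix tau omega N s' q"
  have mix_le: "\<bar>lateral_mix tau omega N g q\<bar> \<le> (1 + \<bar>tau\<bar> * B) * K"
    if "\<And>j. j < dout \<Longrightarrow> \<bar>g j\<bar> \<le> K" for g K
    using q N[OF q] that omega[OF q] by (intro abs_lateral_mix_le[where D = "{..<dout}"]) auto
  have "\<bar>x\<bar> \<le> A" "\<bar>y\<bar> \<le> A"
    unfolding x_def y_def s_def s'_def using A
    by (auto intro!: order.trans[OF mix_le] abs_sprecher_s_le args phi psi)
  then have xy: "x \<in> {-A..A}" "y \<in> {-A..A}" by auto
  have "\<bar>x - y\<bar> \<le> (1 + \<bar>tau\<bar> * B) * ((\<Sum>i<din. \<bar>lam i\<bar>) * \<delta>)"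
    unfolding x_def y_def s_def s'_def lateral_mix_diff
    by (intro mix_le abs_sprecher_s_diff_le phi_psi args)
  then have "L * \<bar>x - y\<bar> \<le> L * (1 + \<bar>tau\<bar> * B) * (\<Sum>i<din. \<bar>lam i\<bar>) * \<delta>"
    using L by (simp add: mult_left_mono mult.assoc)
  moreover have "\<bar>Phi x - Psi y\<bar> \<le> L * \<bar>x - y\<bar> + \<delta>'"
    using Phi_lip[OF xy] Phi_Psi[OF xy(2)] abs_triangle_ineq[of "Phi x - Phi y" "Phi y - Psi y"]
    by linarith
  ultimately show ?thesis
    by (simp add: sprecher_T_def sprecher_stilde_eq_lateral_mix x_def y_def s_def s'_def)
qed

lemma vec_inf_norm_le:
  assumes "0 < d" "\<And>q. q < d \<Longrightarrow> \<bar>v q\<bar> \<le> c"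
  shows "vec_inf_norm d v \<le> c"
  using assms unfolding vec_inf_norm_def by (subst Max_le_iff) auto

lemma weighted_sum_le_max:
  fixes c c' x y :: real
  assumes "0 \<le> c" "0 \<le> c'"
  shows "c * x + c' * y \<le> (c + c') * max x y"
  using mult_left_mono[OF max.cobounded1[of x y] assms(1)]
    mult_left_mono[OF max.cobounded2[of y x] assms(2)]
  by (simp add: distrib_right)

theorem mainTheorem2:
  fixes din dout Gphi GPhi :: nat
    and lam :: "nat \<Rightarrow> real"
    and eta alpha tau Bin :: real
    and N :: "nat \<Rightarrow> nat set"
    and omega :: "nat \<Rightarrow> nat \<Rightarrow> real"
    and phi Phi :: "real \<Rightarrow> real"
    and R :: "(nat \<Rightarrow> real) \<Rightarrow> (nat \<Rightarrow> real)"
  assumes din: "din \<ge> 1" and dout: "dout \<ge> 1"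
    and N_sub: "\<forall>q<dout. N q \<subseteq> {..<dout}"
    and Bin_pos: "Bin > 0"
    and Gphi: "Gphi \<ge> 2" and GPhi: "GPhi \<ge> 2"
  defines "aphi \<equiv> Bin + \<bar>eta\<bar> * (real dout - 1)"
  defines "lam1 \<equiv> (\<Sum>i<din. \<bar>lam i\<bar>)"
  defines "Mphi \<equiv> sup_abs phi (- aphi) aphi"
  defines "Bomega \<equiv> Max ((\<lambda>q. \<Sum>j\<in>N q. \<bar>omega q j\<bar>) ` {..<dout})"
  defines "Rmix \<equiv> 1 + \<bar>tau\<bar> * Bomega"
  defines "Ms \<equiv> lam1 * Mphi + \<bar>alpha\<bar> * (real dout - 1)"
  defines "aPhi \<equiv> Rmix * Ms"
  defines "hphi \<equiv> (2 * aphi) / (real Gphi - 1)"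
  defines "hPhi \<equiv> (2 * aPhi) / (real GPhi - 1)"
  defines "Mphi2 \<equiv> sup_abs (deriv (deriv phi)) (- aphi) aphi"
  defines "MPhi2 \<equiv> sup_abs (deriv (deriv Phi)) (- aPhi) aPhi"
  defines "LPhi \<equiv> sup_abs (deriv Phi) (- aPhi) aPhi"
  defines "dphi \<equiv> Mphi2 / 8 * hphi ^ 2"
  defines "dPhi \<equiv> MPhi2 / 8 * hPhi ^ 2"
  defines "KT \<equiv> (LPhi * Rmix * lam1 * Mphi2 + MPhi2) / 8"
  defines "T \<equiv> sprecher_T phi Phi lam eta alpha tau omega N din"
  defines "That \<equiv> sprecher_T (pl_interp phi (- aphi) aphi Gphi)
                  (pl_interp Phi (- aPhi) aPhi GPhi) lam eta alpha tau omega N din"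
  assumes phi_C2: "C2_near phi {- aphi..aphi}"
    and Phi_C2: "C2_near Phi {- aPhi..aPhi}"
  shows "\<forall>z. (\<forall>i<din. \<bar>z i\<bar> \<le> Bin) \<longrightarrow>
           vec_inf_norm dout (\<lambda>q. T z q - That z q) \<le> LPhi * Rmix * lam1 * dphi + dPhi
         \<and> LPhi * Rmix * lam1 * dphi + dPhi \<le> KT * max (hphi ^ 2) (hPhi ^ 2)
         \<and> vec_inf_norm dout (\<lambda>q. (T z q + R z q) - (That z q + R z q))
              \<le> LPhi * Rmix * lam1 * dphi + dPhi"
proof -
  note phi = C2_nearD[OF phi_C2] and Phi = C2_nearD[OF Phi_C2]
  have aphi: "0 \<le> aphi" using Bin_pos dout by (simp add: aphi_def)
  have Bomega: "(\<Sum>j\<in>N q. \<bar>omega q j\<bar>) \<le> Bomega" if "q < dout" for q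
    using that by (auto simp: Bomega_def)
  have "0 \<le> Bomega" using order.trans[OF sum_nonneg Bomega[of 0]] dout by auto
  then have Rmix: "0 \<le> Rmix" by (simp add: Rmix_def)
  have aPhi: "0 \<le> aPhi"
    using Rmix sup_abs_nonneg[OF phi(3)] aphi dout
    by (simp add: aPhi_def Ms_def lam1_def Mphi_def sum_nonneg)
  have LPhi: "0 \<le> LPhi" using sup_abs_nonneg[OF Phi(4)] aPhi by (simp add: LPhi_def)
  have phi_bound: "\<bar>phi y\<bar> \<le> Mphi" "\<bar>pl_interp phi (- aphi) aphi Gphi y\<bar> \<le> Mphi"
    and phi_error: "\<bar>phi y - pl_interp phi (- aphi) aphi Gphi y\<bar> \<le> dphi"
    if "y \<in> {-aphi..aphi}" for y
    using that aphi abs_le_sup_abs[OF phi(3)] pl_interp_abs_le_sup_abs[OF _ Gphi _ phi(3)]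
      pl_interp_error_sup_abs[OF _ Gphi _ phi_C2]
    by (simp_all add: Mphi_def dphi_def Mphi2_def hphi_def)
  have Phi_lipschitz: "\<bar>Phi x - Phi y\<bar> \<le> LPhi * \<bar>x - y\<bar>"
    if "x \<in> {-aPhi..aPhi}" "y \<in> {-aPhi..aPhi}" for x y
    using abs_diff_le_sup_abs_deriv[OF Phi(1,4) that] by (simp add: LPhi_def)
  have Phi_error: "\<bar>Phi y - pl_interp Phi (- aPhi) aPhi GPhi y\<bar> \<le> dPhi"
    if "y \<in> {-aPhi..aPhi}" for y
    using pl_interp_error_sup_abs[OF _ GPhi that Phi_C2] aPhi
    by (simp add: dPhi_def MPhi2_def hPhi_def)
  have component_error: "\<bar>T z q - That z q\<bar> \<le> LPhi * Rmix * lam1 * dphi + dPhi"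
    if z: "\<forall>i<din. \<bar>z i\<bar> \<le> Bin" and "q < dout" for z q
    unfolding T_def That_def Rmix_def lam1_def
  proof (rule abs_sprecher_T_diff_le[where I = "{-aphi..aphi}" and M = Mphi and A = aPhi])
    show "z i + eta * real q \<in> {-aphi..aphi}" if "i < din" "q < dout" for i q
      using z that unfolding aphi_def by (intro sprecher_arg_bound) auto
  qed (use that N_sub Bomega LPhi phi_bound phi_error Phi_lipschitz Phi_error in
        \<open>auto simp: aPhi_def Ms_def Rmix_def lam1_def\<close>)
  moreover have "LPhi * Rmix * lam1 * dphi + dPhi \<le> KT * max (hphi ^ 2) (hPhi ^ 2)"
  proof -
    have "0 \<le> LPhi * Rmix * lam1 * Mphi2 / 8" "0 \<le> MPhi2 / 8"
      using LPhi Rmix aphi aPhi sup_abs_nonneg[OF phi(5)] sup_abs_nonneg[OF Phi(5)]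
      by (simp_all add: lam1_def Mphi2_def MPhi2_def sum_nonneg)
    from weighted_sum_le_max[OF this, of "hphi ^ 2" "hPhi ^ 2"] show ?thesis
      by (simp add: dphi_def dPhi_def KT_def add_divide_distrib)
  qed
  ultimately show ?thesis using dout by (auto intro: vec_inf_norm_le)
qed

end
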